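(* For every smooth closed plane curve parametrized by arc length with rotation number $n\ge1$, $4\pi^2 n\,|I_{-1}|\le I_0$.
   Context: A closed plane curve is a smooth map $\vec f:\mathbb{R}/L\mathbb{Z}\to\mathbb{R}^2$ parametrized by arc length $s$, where $L>0$ is its length. $\vec\nu$ is $\partial_s\vec f$ rotated counterclockwise by $\pi/2$, $\kappa=\partial_s^2\vec f\cdot\vec\nu$, $n=\frac1{2\pi}\int_0^L\kappa\,ds$, $A=-\frac12\int_0^L\vec f\cdot\vec\nu\,ds$, $\tilde\kappa=\kappa-\frac1L\int_0^L\kappa\,ds$, $I_0=L\int_0^L\tilde\kappa^2\,ds$, and $I_{-1}=1-\frac{4n\pi A}{L^2}$. *)

theory Defs
  imports "HOL-Analysis.Analysis"
begin

text \<open>A plane curve is given by its two coordinate functions x, y :: real => real,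
  defined on all of R and L-periodic (i.e. a map R/LZ -> R^2).\<close>

definition smooth_fun :: "(real \<Rightarrow> real) \<Rightarrow> bool" where
  "smooth_fun g \<longleftrightarrow> (\<forall>k. (deriv ^^ k) g differentiable_on UNIV)"

definition closed_arclength_curve :: "(real \<Rightarrow> real) \<Rightarrow> (real \<Rightarrow> real) \<Rightarrow> real \<Rightarrow> bool" where
  "closed_arclength_curve x y L \<longleftrightarrow>
     L > 0 \<and> smooth_fun x \<and> smooth_fun y \<and>
     (\<forall>s. x (s + L) = x s \<and> y (s + L) = y s) \<and>
     (\<forall>s. (deriv x s)\<^sup>2 + (deriv y s)\<^sup>2 = 1)"

text \<open>Normal nu = tangent rotated by pi/2 counterclockwise: nu = (-y', x').
  Curvature kappa = f'' . nu.\<close>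
definition curvature :: "(real \<Rightarrow> real) \<Rightarrow> (real \<Rightarrow> real) \<Rightarrow> real \<Rightarrow> real" where
  "curvature x y s = deriv (deriv x) s * (- deriv y s) + deriv (deriv y) s * deriv x s"

definition rotation_number :: "(real \<Rightarrow> real) \<Rightarrow> (real \<Rightarrow> real) \<Rightarrow> real \<Rightarrow> real" where
  "rotation_number x y L = (1 / (2 * pi)) * integral {0..L} (curvature x y)"

definition enclosed_area :: "(real \<Rightarrow> real) \<Rightarrow> (real \<Rightarrow> real) \<Rightarrow> real \<Rightarrow> real" where
  "enclosed_area x y L = - (1/2) * integral {0..L} (\<lambda>s. x s * (- deriv y s) + y s * deriv x s)"

definition osc_curvature :: "(real \<Rightarrow> real) \<Rightarrow> (real \<Rightarrow> real) \<Rightarrow> real \<Rightarrow> real \<Rightarrow> real" where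
  "osc_curvature x y L s = curvature x y s - (1 / L) * integral {0..L} (curvature x y)"

definition I0 :: "(real \<Rightarrow> real) \<Rightarrow> (real \<Rightarrow> real) \<Rightarrow> real \<Rightarrow> real" where
  "I0 x y L = L * integral {0..L} (\<lambda>s. (osc_curvature x y L s)\<^sup>2)"

definition Im1 :: "(real \<Rightarrow> real) \<Rightarrow> (real \<Rightarrow> real) \<Rightarrow> real \<Rightarrow> real" where
  "Im1 x y L = 1 - 4 * rotation_number x y L * pi * enclosed_area x y L / L\<^sup>2"

end

theory Submission
  imports Defs
begin

text \<open>Let w = 2 pi n / L be the mean curvature and consider the closed curve
  h = (x' + w y, y' - w x). Its velocity h' = (x'' + w y', y'' - w x') has length |kappa - w|, and
  the integral of the cross product h x h' over a period equals
  int kappa - 2 w L + 2 w^2 A = - w L I_{-1}. The isoperimetric-type bound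
  |int h x h'| <= L / (2 pi) int |h'|^2, which follows from Wirtinger's inequality applied to the
  components of h, therefore gives 2 pi w L |I_{-1}| <= I_0.

  Wirtinger's inequality for functions vanishing at both ends of an interval comes from the
  calibration (w u^2 cot (w (t - a)))' <= u'^2 - w^2 u^2; the periodic version reduces to it by
  cutting the period at two points half a period apart where u takes the same value.\<close>

lemma integrable_continuous_UNIV:
  fixes f :: "real \<Rightarrow> real"
  shows "continuous_on UNIV f \<Longrightarrow> f integrable_on {a..b}"
  by (intro integrable_continuous_real) (auto intro: continuous_on_subset)

lemma continuous_on_UNIV_of_real_derivative:
  "(\<And>t. (f has_real_derivative f' t) (at t)) \<Longrightarrow> continuous_on UNIV f"
  by (rule DERIV_continuous_on) simp

lemma mult_cos_le_sin:
  fixes t :: real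
  assumes "0 \<le> t" "t \<le> pi"
  shows "t * cos t \<le> sin t"
proof -
  have "(\<lambda>x. sin x - x * cos x) 0 \<le> (\<lambda>x. sin x - x * cos x) t"
  proof (rule DERIV_nonneg_imp_nondecreasing[OF assms(1)])
    fix x assume "0 \<le> x" "x \<le> t"
    then have "x * sin x \<ge> 0"
      using assms by (simp add: sin_ge_zero)
    moreover have "DERIV (\<lambda>x. sin x - x * cos x) x :> x * sin x"
      by (auto intro!: derivative_eq_intros)
    ultimately show "\<exists>y. DERIV (\<lambda>x. sin x - x * cos x) x :> y \<and> 0 \<le> y"
      by blast
  qed
  then show ?thesis
    by simp
qed

lemma abs_cot_mult_le_one:
  fixes t :: real
  assumes "0 < t" "t \<le> pi / 2"
  shows "\<bar>cot t\<bar> * t \<le> 1"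
proof -
  have "sin t > 0" "cos t \<ge> 0"
    using assms by (auto intro: sin_gt_zero cos_ge_zero)
  with mult_cos_le_sin[of t] assms show ?thesis
    by (simp add: cot_def field_simps)
qed

lemma abs_cot_mult_min_le_one:
  fixes t :: real
  assumes "0 < t" "t < pi"
  shows "\<bar>cot t\<bar> * min t (pi - t) \<le> 1"
proof (cases "t \<le> pi / 2")
  case True
  then show ?thesis
    using abs_cot_mult_le_one[of t] assms by (simp add: min_def)
next
  case False
  have "cot (pi - t) = - cot t"
    by (simp add: cot_def)
  with False show ?thesis
    using abs_cot_mult_le_one[of "pi - t"] assms by (simp add: min_def)
qed

lemma cot_calibration_le_integral:
  fixes u u' :: "real \<Rightarrow> real" and w a s r :: real
  assumes "s \<le> r"
    and der: "\<And>t. (u has_real_derivative u' t) (at t)"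
    and cont: "continuous_on UNIV u'"
    and sin: "\<And>t. t \<in> {s..r} \<Longrightarrow> sin (w * (t - a)) \<noteq> 0"
  shows "w * (u r)\<^sup>2 * cot (w * (r - a)) - w * (u s)\<^sup>2 * cot (w * (s - a))
           \<le> integral {s..r} (\<lambda>t. (u' t)\<^sup>2 - w\<^sup>2 * (u t)\<^sup>2)"
proof -
  define F where "F t = w * (u t)\<^sup>2 * cot (w * (t - a))" for t
  define F' where "F' t = 2 * w * u t * u' t * cot (w * (t - a))
                             - w\<^sup>2 * (u t)\<^sup>2 / (sin (w * (t - a)))\<^sup>2" for t
  have F': "(F' has_integral (F r - F s)) {s..r}"
  proof (rule fundamental_theorem_of_calculus[OF \<open>s \<le> r\<close>])
    fix t assume "t \<in> {s..r}"
    then have "sin (w * (t - a)) \<noteq> 0"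
      using sin by blast
    then have "(F has_real_derivative F' t) (at t)"
      unfolding F_def F'_def
      by (auto intro!: derivative_eq_intros der DERIV_chain2[OF DERIV_cot]
          simp: power2_eq_square field_simps)
    then show "(F has_vector_derivative F' t) (at t within {s..r})"
      by (simp add: has_real_derivative_iff_has_vector_derivative has_vector_derivative_at_within)
  qed
  moreover have "F' t \<le> (u' t)\<^sup>2 - w\<^sup>2 * (u t)\<^sup>2" if "t \<in> {s..r}" for t
  proof -
    have square: "p\<^sup>2 - w\<^sup>2 * q\<^sup>2 - (2 * w * q * p * (C / S) - w\<^sup>2 * q\<^sup>2 / S\<^sup>2) = (p - w * q * (C / S))\<^sup>2"
      if "S \<noteq> 0" "S\<^sup>2 + C\<^sup>2 = 1" for p q S C :: real
      using that by (simp add: field_simps power2_eq_square) algebra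
    have "(u' t)\<^sup>2 - w\<^sup>2 * (u t)\<^sup>2 - F' t = (u' t - w * u t * cot (w * (t - a)))\<^sup>2"
      unfolding F'_def cot_def using sin that by (blast intro: square sin_cos_squared_add)
    then show ?thesis
      by (metis diff_ge_0_iff_ge zero_le_power2)
  qed
  moreover have "(\<lambda>t. (u' t)\<^sup>2 - w\<^sup>2 * (u t)\<^sup>2) integrable_on {s..r}"
    using cont continuous_on_UNIV_of_real_derivative[OF der]
    by (intro integrable_continuous_UNIV continuous_intros)
  ultimately have "integral {s..r} F' \<le> integral {s..r} (\<lambda>t. (u' t)\<^sup>2 - w\<^sup>2 * (u t)\<^sup>2)"
    by (intro integral_le has_integral_integrable) auto
  with F' show ?thesis
    unfolding F_def by (simp add: integral_unique)
qed

lemma abs_le_mult_min_dist_of_zeros: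
  fixes u u' :: "real \<Rightarrow> real"
  assumes der: "\<And>t. (u has_real_derivative u' t) (at t)"
    and K: "\<And>t. t \<in> {a..b} \<Longrightarrow> \<bar>u' t\<bar> \<le> K"
    and "u a = 0" "u b = 0" "t \<in> {a..b}"
  shows "\<bar>u t\<bar> \<le> K * min (t - a) (b - t)"
proof -
  have "\<bar>u t - u c\<bar> \<le> K * \<bar>t - c\<bar>" if "c \<in> {a..b}" for c
    using field_differentiable_bound[of "{a..b}" u u' K t c] der K \<open>t \<in> {a..b}\<close> that
    by (auto intro: has_field_derivative_at_within)
  from this[of a] this[of b] assms(3-5) show ?thesis
    by (auto simp: min_def)
qed

lemma abs_cot_calibration_le:
  fixes v K a b t :: real
  assumes "a < t" "t < b" "0 \<le> K" "\<bar>v\<bar> \<le> K * min (t - a) (b - t)"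
  shows "\<bar>pi / (b - a) * v\<^sup>2 * cot (pi / (b - a) * (t - a))\<bar> \<le> K\<^sup>2 * min (t - a) (b - t)"
proof -
  define w m where "w = pi / (b - a)" and "m = min (t - a) (b - t)"
  have "w > 0" "m \<ge> 0"
    using assms by (auto simp: w_def m_def)
  have "w * m = min (w * (t - a)) (pi - w * (t - a))"
    using assms \<open>w > 0\<close> by (simp add: m_def w_def min_mult_distrib_left field_simps)
  moreover have "0 < w * (t - a)" "w * (t - a) < pi"
    using assms \<open>w > 0\<close> by (auto simp: w_def field_simps)
  ultimately have cot: "\<bar>cot (w * (t - a))\<bar> * (w * m) \<le> 1"
    by (simp add: abs_cot_mult_min_le_one)
  have "\<bar>v\<bar> \<le> \<bar>K * m\<bar>"
    using assms \<open>m \<ge> 0\<close> by (simp add: m_def abs_mult)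
  then have "v\<^sup>2 \<le> (K * m)\<^sup>2"
    by (simp only: abs_le_square_iff)
  then have "\<bar>w * v\<^sup>2 * cot (w * (t - a))\<bar> \<le> w * (K * m)\<^sup>2 * \<bar>cot (w * (t - a))\<bar>"
    using \<open>w > 0\<close> by (simp add: abs_mult mult_right_mono)
  also have "\<dots> = K\<^sup>2 * m * (\<bar>cot (w * (t - a))\<bar> * (w * m))"
    by (simp add: power2_eq_square)
  also have "\<dots> \<le> K\<^sup>2 * m"
    using cot \<open>m \<ge> 0\<close> by (simp add: mult_left_le)
  finally show ?thesis
    by (simp add: w_def m_def)
qed

lemma nonneg_of_ge_neg_linear:
  fixes X C e :: real
  assumes "0 < e" "\<And>d. 0 < d \<Longrightarrow> d < e \<Longrightarrow> - (C * d) \<le> X"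
  shows "0 \<le> X"
proof (rule tendsto_le[OF trivial_limit_at_right_real tendsto_const])
  show "((\<lambda>d. - (C * d)) \<longlongrightarrow> 0) (at_right 0)"
    by (auto intro!: tendsto_eq_intros)
  show "\<forall>\<^sub>F d in at_right 0. - (C * d) \<le> X"
  proof (rule eventually_mono)
    show "\<forall>\<^sub>F d in at_right 0. d \<in> {0<..<e}"
      using \<open>0 < e\<close> by (rule eventually_at_right_real)
  qed (use assms(2) in auto)
qed

lemma wirtinger_dirichlet:
  fixes u u' :: "real \<Rightarrow> real" and a b :: real
  assumes "a < b"
    and der: "\<And>t. (u has_real_derivative u' t) (at t)"
    and cont: "continuous_on UNIV u'"
    and "u a = 0" "u b = 0"
  shows "(pi / (b - a))\<^sup>2 * integral {a..b} (\<lambda>t. (u t)\<^sup>2) \<le> integral {a..b} (\<lambda>t. (u' t)\<^sup>2)"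
proof -
  define w where "w = pi / (b - a)"
  define g where "g t = (u' t)\<^sup>2 - w\<^sup>2 * (u t)\<^sup>2" for t
  define F where "F t = w * (u t)\<^sup>2 * cot (w * (t - a))" for t
  have cont_u: "continuous_on UNIV u"
    using der by (rule continuous_on_UNIV_of_real_derivative)
  have cont_g: "continuous_on UNIV g"
    unfolding g_def using cont cont_u by (intro continuous_intros)
  then have int_g: "g integrable_on {s..r}" for s r
    by (rule integrable_continuous_UNIV)
  obtain K where "K \<ge> 0" and K: "\<And>t. t \<in> {a..b} \<Longrightarrow> \<bar>u' t\<bar> \<le> K"
    using continuous_on_compact_bound[OF compact_Icc[of a b] continuous_on_subset[OF cont]] by auto
  obtain M where M: "\<And>t. t \<in> {a..b} \<Longrightarrow> \<bar>g t\<bar> \<le> M"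
    using continuous_on_compact_bound[OF compact_Icc[of a b] continuous_on_subset[OF cont_g]] by auto
  have g_lower: "- M * (q - p) \<le> integral {p..q} g" if "a \<le> p" "p \<le> q" "q \<le> b" for p q
  proof -
    have "integral {p..q} (\<lambda>_. - M) \<le> integral {p..q} g"
    proof (intro integral_le int_g)
      fix t assume "t \<in> {p..q}"
      with that have "\<bar>g t\<bar> \<le> M"
        by (intro M) auto
      then show "- M \<le> g t"
        by linarith
    qed (rule integrable_const_ivl)
    with that show ?thesis
      by (simp add: mult.commute)
  qed
  have F_bound: "\<bar>F t\<bar> \<le> K\<^sup>2 * min (t - a) (b - t)" if "a < t" "t < b" for t
    unfolding F_def w_def using that \<open>K \<ge> 0\<close> \<open>u a = 0\<close> \<open>u b = 0\<close>
    by (intro abs_cot_calibration_le abs_le_mult_min_dist_of_zeros[OF der K]) auto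
  txt \<open>F is singular at a and b, but u vanishes there, so that F is O(distance) near the ends
    and the calibration inequality can be integrated over [a + d, b - d] with d tending to 0.\<close>
  have "- ((2 * M + 2 * K\<^sup>2) * d) \<le> integral {a..b} g" if "0 < d" "d < (b - a) / 2" for d
  proof -
    define s r where "s = a + d" and "r = b - d"
    have "a < s" "s \<le> r" "r < b"
      using that by (auto simp: s_def r_def)
    have "sin (w * (t - a)) \<noteq> 0" if "t \<in> {s..r}" for t
    proof -
      have "0 < w * (t - a)" "w * (t - a) < pi"
        using that \<open>a < s\<close> \<open>r < b\<close> by (auto simp: w_def field_simps)
      then show ?thesis
        using sin_gt_zero by force
    qed
    then have "F r - F s \<le> integral {s..r} g"
      unfolding F_def g_def using cot_calibration_le_integral[OF \<open>s \<le> r\<close> der cont] by blast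
    moreover have "\<bar>F s\<bar> \<le> K\<^sup>2 * d" "\<bar>F r\<bar> \<le> K\<^sup>2 * d"
      using F_bound[of s] F_bound[of r] that \<open>a < s\<close> \<open>s \<le> r\<close> \<open>r < b\<close>
      by (auto simp: s_def r_def min_def)
    moreover have "- M * d \<le> integral {a..s} g" "- M * d \<le> integral {r..b} g"
      using g_lower[of a s] g_lower[of r b] \<open>a < s\<close> \<open>s \<le> r\<close> \<open>r < b\<close>
      by (auto simp: s_def r_def)
    moreover have "integral {a..b} g = integral {a..s} g + integral {s..r} g + integral {r..b} g"
      using \<open>a < s\<close> \<open>s \<le> r\<close> \<open>r < b\<close>
      by (smt (verit) Henstock_Kurzweil_Integration.integral_combine int_g)
    ultimately show ?thesis
      by (simp add: algebra_simps)
  qed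
  then have "0 \<le> integral {a..b} g"
    using \<open>a < b\<close> by (intro nonneg_of_ge_neg_linear[of "(b - a) / 2"]) auto
  moreover have "integral {a..b} g = integral {a..b} (\<lambda>t. (u' t)\<^sup>2) - w\<^sup>2 * integral {a..b} (\<lambda>t. (u t)\<^sup>2)"
    unfolding g_def using cont cont_u
    by (simp add: integral_diff integrable_continuous_UNIV continuous_intros)
  ultimately show ?thesis
    by (simp add: w_def)
qed

lemma has_integral_derivative_zero:
  fixes F f :: "real \<Rightarrow> real"
  assumes "a \<le> b" "\<And>t. (F has_real_derivative f t) (at t)" "F b = F a"
  shows "(f has_integral 0) {a..b}"
proof -
  have "(f has_integral (F b - F a)) {a..b}"
    using assms(1,2)
    by (intro fundamental_theorem_of_calculus)
      (auto simp: has_real_derivative_iff_has_vector_derivative[symmetric]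
        intro: has_field_derivative_at_within)
  with assms(3) show ?thesis
    by simp
qed

lemma derivative_periodic:
  assumes der: "\<And>t. (f has_real_derivative f' t) (at t)" and per: "\<And>t. f (t + L) = f t"
  shows "f' (t + L) = f' t"
proof -
  have "((\<lambda>s. f (s + L)) has_real_derivative f' (t + L) * 1) (at t)"
    by (rule DERIV_chain2[of f, OF der]) (auto intro!: derivative_eq_intros)
  with per have "(f has_real_derivative f' (t + L)) (at t)"
    by simp
  then show ?thesis
    using der by (rule DERIV_unique)
qed

lemma integral_periodic_shift:
  fixes f :: "real \<Rightarrow> real"
  assumes cont: "continuous_on UNIV f" and per: "\<And>t. f (t + L) = f t"
    and "0 \<le> a" "a \<le> L"
  shows "integral {a..a + L} f = integral {0..L} f"
proof -
  have "integral {L..a + L} f = integral {0..a} f"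
    using integral_shift_Icc_real[of 0 a f L] per by (simp add: add.commute comp_def)
  moreover have "integral {a..L} f + integral {L..a + L} f = integral {a..a + L} f"
    "integral {0..a} f + integral {a..L} f = integral {0..L} f"
    using assms by (auto intro!: Henstock_Kurzweil_Integration.integral_combine
        integrable_continuous_UNIV)
  ultimately show ?thesis
    by linarith
qed

lemma wirtinger_periodic:
  fixes u u' :: "real \<Rightarrow> real" and L :: real
  assumes "L > 0"
    and der: "\<And>t. (u has_real_derivative u' t) (at t)"
    and cont: "continuous_on UNIV u'"
    and per: "\<And>t. u (t + L) = u t"
  shows "\<exists>c. (2 * pi / L)\<^sup>2 * integral {0..L} (\<lambda>t. (u t - c)\<^sup>2) \<le> integral {0..L} (\<lambda>t. (u' t)\<^sup>2)"
proof -
  have cont_u: "continuous_on UNIV u"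
    using der by (rule continuous_on_UNIV_of_real_derivative)
  define q where "q t = u t - u (t + L / 2)" for t
  have "continuous_on {0..L / 2} q"
    unfolding q_def using cont_u by (intro continuous_intros continuous_on_compose2[OF cont_u]) auto
  moreover have "q (L / 2) = - q 0"
    unfolding q_def using per[of 0] by simp
  ultimately obtain a where a: "0 \<le> a" "a \<le> L / 2" "q a = 0"
    using IVT'[of q 0 0 "L / 2"] IVT2'[of q "L / 2" 0 0] \<open>L > 0\<close>
    by (cases "q 0 \<le> 0") (auto simp: linorder_not_le)
  define v where "v t = u t - u a" for t
  have der_v: "(v has_real_derivative u' t) (at t)" for t
    unfolding v_def using der[of t] by (auto intro!: derivative_eq_intros)
  have v0: "v a = 0" "v (a + L / 2) = 0" "v (a + L) = 0"
    using a per[of a] by (auto simp: v_def q_def)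
  have cont_v2: "continuous_on UNIV (\<lambda>t. (v t)\<^sup>2)" and cont_u'2: "continuous_on UNIV (\<lambda>t. (u' t)\<^sup>2)"
    unfolding v_def using cont_u cont by (auto intro!: continuous_intros)
  have "(2 * pi / L)\<^sup>2 * integral {a..a + L} (\<lambda>t. (v t)\<^sup>2) \<le> integral {a..a + L} (\<lambda>t. (u' t)\<^sup>2)"
  proof -
    have "(2 * pi / L)\<^sup>2 * integral {a..a + L / 2} (\<lambda>t. (v t)\<^sup>2) \<le> integral {a..a + L / 2} (\<lambda>t. (u' t)\<^sup>2)"
      "(2 * pi / L)\<^sup>2 * integral {a + L / 2..a + L} (\<lambda>t. (v t)\<^sup>2) \<le> integral {a + L / 2..a + L} (\<lambda>t. (u' t)\<^sup>2)"
      using wirtinger_dirichlet[of a "a + L / 2" v u', OF _ der_v cont v0(1,2)]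
        wirtinger_dirichlet[of "a + L / 2" "a + L" v u', OF _ der_v cont v0(2,3)] \<open>L > 0\<close>
      by (simp_all add: field_simps)
    moreover have "integral {a..a + L / 2} f + integral {a + L / 2..a + L} f = integral {a..a + L} f"
      if "continuous_on UNIV f" for f :: "real \<Rightarrow> real"
      using \<open>L > 0\<close> that by (intro Henstock_Kurzweil_Integration.integral_combine integrable_continuous_UNIV) auto
    ultimately show ?thesis
      using cont_v2 cont_u'2 by (smt (verit) distrib_left)
  qed
  moreover have "integral {a..a + L} (\<lambda>t. (v t)\<^sup>2) = integral {0..L} (\<lambda>t. (v t)\<^sup>2)"
    "integral {a..a + L} (\<lambda>t. (u' t)\<^sup>2) = integral {0..L} (\<lambda>t. (u' t)\<^sup>2)"
    using a \<open>L > 0\<close> cont_v2 cont_u'2 derivative_periodic[OF der per]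
    by (auto intro!: integral_periodic_shift simp: v_def per)
  ultimately show ?thesis
    unfolding v_def by auto
qed

lemma abs_cross_le_weighted_squares:
  fixes p1 p2 q1 q2 w :: real
  assumes "w > 0"
  shows "\<bar>p1 * q2 - p2 * q1\<bar> \<le> (w * (p1\<^sup>2 + p2\<^sup>2) + (q1\<^sup>2 + q2\<^sup>2) / w) / 2"
proof -
  have "2 * w * \<bar>p1 * q2 - p2 * q1\<bar> \<le> w\<^sup>2 * (p1\<^sup>2 + p2\<^sup>2) + (q1\<^sup>2 + q2\<^sup>2)"
    using \<open>w > 0\<close> sum_squares_ge_zero[of "w * p1 - q2" "w * p2 + q1"]
      sum_squares_ge_zero[of "w * p1 + q2" "w * p2 - q1"]
    by (simp add: abs_if power2_eq_square algebra_simps)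
  with \<open>w > 0\<close> show ?thesis
    by (simp add: field_simps power2_eq_square)
qed

lemma integral_cross_translate:
  fixes h1 h2 h1' h2' :: "real \<Rightarrow> real" and L c1 c2 :: real
  assumes "L \<ge> 0"
    and der1: "\<And>t. (h1 has_real_derivative h1' t) (at t)"
    and der2: "\<And>t. (h2 has_real_derivative h2' t) (at t)"
    and cont1: "continuous_on UNIV h1'" and cont2: "continuous_on UNIV h2'"
    and "h1 L = h1 0" "h2 L = h2 0"
  shows "integral {0..L} (\<lambda>t. h1 t * h2' t - h2 t * h1' t)
    = integral {0..L} (\<lambda>t. (h1 t - c1) * h2' t - (h2 t - c2) * h1' t)"
proof -
  have "((\<lambda>t. c1 * h2' t - c2 * h1' t) has_integral 0) {0..L}"
    using assms
    by (intro has_integral_derivative_zero[of 0 L "\<lambda>t. c1 * h2 t - c2 * h1 t"])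
      (auto intro!: derivative_eq_intros der1 der2)
  moreover have "(\<lambda>t. h1 t * h2' t - h2 t * h1' t)
      = (\<lambda>t. ((h1 t - c1) * h2' t - (h2 t - c2) * h1' t) + (c1 * h2' t - c2 * h1' t))"
    by (auto simp: algebra_simps)
  moreover have "continuous_on UNIV h1" "continuous_on UNIV h2"
    using der1 der2 by (auto intro: continuous_on_UNIV_of_real_derivative)
  ultimately show ?thesis
    using cont1 cont2
    by (simp add: integral_add integrable_continuous_UNIV continuous_intros integral_unique)
qed

lemma abs_integral_cross_le:
  fixes h1 h2 h1' h2' :: "real \<Rightarrow> real" and L :: real
  assumes "L > 0"
    and der1: "\<And>t. (h1 has_real_derivative h1' t) (at t)"
    and der2: "\<And>t. (h2 has_real_derivative h2' t) (at t)"
    and cont1: "continuous_on UNIV h1'" and cont2: "continuous_on UNIV h2'"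
    and per1: "\<And>t. h1 (t + L) = h1 t" and per2: "\<And>t. h2 (t + L) = h2 t"
  shows "\<bar>integral {0..L} (\<lambda>t. h1 t * h2' t - h2 t * h1' t)\<bar>
          \<le> L / (2 * pi) * integral {0..L} (\<lambda>t. (h1' t)\<^sup>2 + (h2' t)\<^sup>2)"
proof -
  define w where "w = 2 * pi / L"
  have "w > 0"
    using \<open>L > 0\<close> by (simp add: w_def)
  have [continuous_intros]: "continuous_on UNIV h1" "continuous_on UNIV h2"
    using der1 der2 by (auto intro: continuous_on_UNIV_of_real_derivative)
  obtain c1 c2 where
    c1: "w\<^sup>2 * integral {0..L} (\<lambda>t. (h1 t - c1)\<^sup>2) \<le> integral {0..L} (\<lambda>t. (h1' t)\<^sup>2)" and
    c2: "w\<^sup>2 * integral {0..L} (\<lambda>t. (h2 t - c2)\<^sup>2) \<le> integral {0..L} (\<lambda>t. (h2' t)\<^sup>2)"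
    using wirtinger_periodic[OF \<open>L > 0\<close> der1 cont1 per1] wirtinger_periodic[OF \<open>L > 0\<close> der2 cont2 per2]
    unfolding w_def by blast
  define k1 k2 where "k1 t = h1 t - c1" and "k2 t = h2 t - c2" for t
  define B where "B t = (w * ((k1 t)\<^sup>2 + (k2 t)\<^sup>2) + ((h1' t)\<^sup>2 + (h2' t)\<^sup>2) / w) / 2" for t
  define P where "P = integral {0..L} (\<lambda>t. (k1 t)\<^sup>2 + (k2 t)\<^sup>2)"
  define Q where "Q = integral {0..L} (\<lambda>t. (h1' t)\<^sup>2 + (h2' t)\<^sup>2)"
  have cont_k [continuous_intros]: "continuous_on UNIV k1" "continuous_on UNIV k2"
    unfolding k1_def k2_def by (auto intro!: continuous_intros)
  have "w\<^sup>2 * P \<le> Q"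
    using c1 c2 cont1 cont2 unfolding P_def Q_def k1_def k2_def
    by (simp add: integral_add integrable_continuous_UNIV continuous_intros distrib_left)
  have "integral {0..L} (\<lambda>t. h1 t * h2' t - h2 t * h1' t)
      = integral {0..L} (\<lambda>t. k1 t * h2' t - k2 t * h1' t)"
    unfolding k1_def k2_def using \<open>L > 0\<close> per1[of 0] per2[of 0]
    by (intro integral_cross_translate der1 der2 cont1 cont2) auto
  also have "\<bar>\<dots>\<bar> \<le> integral {0..L} B"
  proof -
    have "continuous_on UNIV B"
      unfolding B_def using cont1 cont2 \<open>w > 0\<close> by (intro continuous_intros) auto
    then show ?thesis
      using integral_norm_bound_integral[OF integrable_continuous_UNIV integrable_continuous_UNIV,
          of "\<lambda>t. k1 t * h2' t - k2 t * h1' t" B]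
        abs_cross_le_weighted_squares[OF \<open>w > 0\<close>] cont1 cont2
      unfolding B_def by (simp add: continuous_intros)
  qed
  also have "\<dots> = (w * P + Q / w) / 2"
    unfolding B_def P_def Q_def using cont1 cont2
    by (intro integral_unique has_integral_divide has_integral_add has_integral_mult_right
        integrable_integral integrable_continuous_UNIV continuous_intros)
  also have "\<dots> \<le> Q / w"
    using \<open>w\<^sup>2 * P \<le> Q\<close> \<open>w > 0\<close> by (simp add: field_simps power2_eq_square)
  finally show ?thesis
    by (simp add: Q_def w_def mult.commute)
qed

lemma smooth_fun_deriv: "smooth_fun f \<Longrightarrow> smooth_fun (deriv f)"
  unfolding smooth_fun_def by (metis comp_apply funpow_Suc_right)

lemma smooth_fun_has_real_derivative: "smooth_fun f \<Longrightarrow> (f has_real_derivative deriv f t) (at t)"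
  unfolding smooth_fun_def
  by (metis DERIV_deriv_iff_real_differentiable UNIV_I differentiable_on_def funpow_0)

lemma smooth_fun_continuous_on: "smooth_fun f \<Longrightarrow> continuous_on UNIV f"
  using continuous_on_UNIV_of_real_derivative smooth_fun_has_real_derivative by blast

locale closed_curve =
  fixes x y :: "real \<Rightarrow> real" and L :: real
  assumes closed: "closed_arclength_curve x y L"
begin

lemma length_pos: "L > 0"
  and periodic: "x (t + L) = x t" "y (t + L) = y t"
  and unit_speed: "(deriv x t)\<^sup>2 + (deriv y t)\<^sup>2 = 1"
  using closed unfolding closed_arclength_curve_def by auto

lemma smooth: "smooth_fun x" "smooth_fun y" "smooth_fun (deriv x)" "smooth_fun (deriv y)"
  "smooth_fun (deriv (deriv x))" "smooth_fun (deriv (deriv y))"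
  using closed smooth_fun_deriv unfolding closed_arclength_curve_def by blast+

lemmas has_derivative [derivative_intros] = smooth[THEN smooth_fun_has_real_derivative]
lemmas continuous [continuous_intros] = smooth[THEN smooth_fun_continuous_on]

lemma periodic_deriv: "deriv x (t + L) = deriv x t" "deriv y (t + L) = deriv y t"
  using derivative_periodic[OF has_derivative(1) periodic(1)]
    derivative_periodic[OF has_derivative(2) periodic(2)] by auto

lemma tangent_orthogonal_acceleration:
  "deriv x t * deriv (deriv x) t + deriv y t * deriv (deriv y) t = 0"
proof -
  have "((\<lambda>t. (deriv x t)\<^sup>2 + (deriv y t)\<^sup>2) has_real_derivative
      2 * (deriv x t * deriv (deriv x) t + deriv y t * deriv (deriv y) t)) (at t)"
    by (auto intro!: derivative_eq_intros simp: algebra_simps)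
  then have "((\<lambda>_. 1) has_real_derivative
      2 * (deriv x t * deriv (deriv x) t + deriv y t * deriv (deriv y) t)) (at t)"
    by (simp add: unit_speed)
  then show ?thesis
    using DERIV_unique DERIV_const by fastforce
qed

lemma acceleration_eq_curvature:
  "(deriv (deriv x) t)\<^sup>2 + (deriv (deriv y) t)\<^sup>2 = (curvature x y t)\<^sup>2"
proof -
  have "(curvature x y t)\<^sup>2 + (deriv x t * deriv (deriv x) t + deriv y t * deriv (deriv y) t)\<^sup>2
      = ((deriv (deriv x) t)\<^sup>2 + (deriv (deriv y) t)\<^sup>2) * ((deriv x t)\<^sup>2 + (deriv y t)\<^sup>2)"
    unfolding curvature_def by algebra
  then show ?thesis
    by (simp add: tangent_orthogonal_acceleration unit_speed)
qed

lemma has_integral_position_acceleration: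
  "((\<lambda>t. 1 + (x t * deriv (deriv x) t + y t * deriv (deriv y) t)) has_integral 0) {0..L}"
proof (rule has_integral_derivative_zero)
  show "((\<lambda>t. x t * deriv x t + y t * deriv y t) has_real_derivative
      1 + (x t * deriv (deriv x) t + y t * deriv (deriv y) t)) (at t)" for t
    using unit_speed[of t]
    by (auto intro!: derivative_eq_intros simp: power2_eq_square algebra_simps)
qed (use length_pos periodic[of 0] periodic_deriv[of 0] in auto)

lemma has_integral_area:
  "((\<lambda>t. x t * deriv y t - y t * deriv x t) has_integral 2 * enclosed_area x y L) {0..L}"
proof -
  have "((\<lambda>t. x t * (- deriv y t) + y t * deriv x t) has_integral
      integral {0..L} (\<lambda>t. x t * (- deriv y t) + y t * deriv x t)) {0..L}"
    by (intro integrable_integral integrable_continuous_UNIV continuous_intros)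
  then show ?thesis
    unfolding enclosed_area_def by (auto dest: has_integral_neg)
qed

lemma integral_rotated_cross:
  "integral {0..L} (\<lambda>t. (deriv x t + w * y t) * (deriv (deriv y) t - w * deriv x t)
      - (deriv y t - w * x t) * (deriv (deriv x) t + w * deriv y t))
    = integral {0..L} (curvature x y) - 2 * w * L + 2 * w\<^sup>2 * enclosed_area x y L"
proof (rule integral_unique)
  have pointwise: "(\<lambda>t. (deriv x t + w * y t) * (deriv (deriv y) t - w * deriv x t)
      - (deriv y t - w * x t) * (deriv (deriv x) t + w * deriv y t))
    = (\<lambda>t. curvature x y t + w * (1 + (x t * deriv (deriv x) t + y t * deriv (deriv y) t)) - 2 * w
      + w\<^sup>2 * (x t * deriv y t - y t * deriv x t))"
  proof
    fix t
    show "(deriv x t + w * y t) * (deriv (deriv y) t - w * deriv x t)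
        - (deriv y t - w * x t) * (deriv (deriv x) t + w * deriv y t)
      = curvature x y t + w * (1 + (x t * deriv (deriv x) t + y t * deriv (deriv y) t)) - 2 * w
        + w\<^sup>2 * (x t * deriv y t - y t * deriv x t)"
      using unit_speed[of t] unfolding curvature_def power2_eq_square by algebra
  qed
  have "(curvature x y has_integral integral {0..L} (curvature x y)) {0..L}"
    unfolding curvature_def by (intro integrable_integral integrable_continuous_UNIV continuous_intros)
  moreover have "((\<lambda>_. 2 * w) has_integral 2 * w * L) {0..L}"
    using has_integral_const_real[of "2 * w" 0 L] length_pos by (simp add: mult.commute)
  ultimately have "((\<lambda>t. curvature x y t + w * (1 + (x t * deriv (deriv x) t + y t * deriv (deriv y) t)) - 2 * w
      + w\<^sup>2 * (x t * deriv y t - y t * deriv x t)) has_integral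
      integral {0..L} (curvature x y) + w * 0 - 2 * w * L + w\<^sup>2 * (2 * enclosed_area x y L)) {0..L}"
    by (intro has_integral_add has_integral_diff has_integral_mult_right
        has_integral_position_acceleration has_integral_area)
  then show "((\<lambda>t. (deriv x t + w * y t) * (deriv (deriv y) t - w * deriv x t)
      - (deriv y t - w * x t) * (deriv (deriv x) t + w * deriv y t)) has_integral
      integral {0..L} (curvature x y) - 2 * w * L + 2 * w\<^sup>2 * enclosed_area x y L) {0..L}"
    unfolding pointwise by (simp add: algebra_simps)
qed

lemma rotated_acceleration_eq:
  "(deriv (deriv x) t + w * deriv y t)\<^sup>2 + (deriv (deriv y) t - w * deriv x t)\<^sup>2
    = (curvature x y t - w)\<^sup>2"
proof -
  have "(deriv (deriv x) t + w * deriv y t)\<^sup>2 + (deriv (deriv y) t - w * deriv x t)\<^sup>2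
      = (deriv (deriv x) t)\<^sup>2 + (deriv (deriv y) t)\<^sup>2 - 2 * w * curvature x y t
        + w\<^sup>2 * ((deriv x t)\<^sup>2 + (deriv y t)\<^sup>2)"
    unfolding curvature_def by (simp add: power2_eq_square algebra_simps)
  then show ?thesis
    by (simp only: acceleration_eq_curvature unit_speed) (simp add: power2_eq_square algebra_simps)
qed

end

theorem mainTheorem5:
  fixes x y :: "real \<Rightarrow> real" and L :: real
  assumes "closed_arclength_curve x y L"
    and "rotation_number x y L \<ge> 1"
  shows "4 * pi\<^sup>2 * rotation_number x y L * \<bar>Im1 x y L\<bar> \<le> I0 x y L"
proof -
  interpret closed_curve x y L
    using assms(1) by unfold_locales
  define w where "w = (1 / L) * integral {0..L} (curvature x y)"
  have L: "L > 0" and total: "integral {0..L} (curvature x y) = w * L"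
    and rot: "rotation_number x y L = w * L / (2 * pi)"
    using length_pos by (auto simp: rotation_number_def w_def)
  with assms(2) have "w > 0"
    by (smt (verit) divide_nonpos_pos pi_gt_zero zero_less_mult_iff)
  have "\<bar>integral {0..L} (\<lambda>t. (deriv x t + w * y t) * (deriv (deriv y) t - w * deriv x t)
          - (deriv y t - w * x t) * (deriv (deriv x) t + w * deriv y t))\<bar>
      \<le> L / (2 * pi) * integral {0..L} (\<lambda>t. (deriv (deriv x) t + w * deriv y t)\<^sup>2
          + (deriv (deriv y) t - w * deriv x t)\<^sup>2)"
    by (rule abs_integral_cross_le[OF L])
      (auto intro!: derivative_eq_intros continuous_intros simp: periodic periodic_deriv)
  moreover have "osc_curvature x y L t = curvature x y t - w" for t
    by (simp add: osc_curvature_def w_def)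
  ultimately have "\<bar>L * w - 2 * w\<^sup>2 * enclosed_area x y L\<bar> \<le> I0 x y L / (2 * pi)"
    using L by (simp add: integral_rotated_cross rotated_acceleration_eq total I0_def abs_minus_commute)
  moreover have "L * w - 2 * w\<^sup>2 * enclosed_area x y L = w * L * Im1 x y L"
    using L unfolding Im1_def rot by (simp add: field_simps power2_eq_square)
  ultimately have "w * L * \<bar>Im1 x y L\<bar> \<le> I0 x y L / (2 * pi)"
    using \<open>w > 0\<close> L by (simp add: abs_mult)
  then show ?thesis
    unfolding rot by (simp add: power2_eq_square field_simps)
qed

end
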